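(* Let $U:[0,T]\times\mathbb{R}^N\to\mathbb{R}\cup\{\pm\infty\}$ be proper and lower semicontinuous, and let $H:[0,T]\times\mathbb{R}^N\times\mathbb{R}^N\to\mathbb{R}$ satisfy (H1)–(H3); put $L(t,x,\cdot)=H^*(t,x,\cdot)$. Suppose that for every $(t,x)\in\mathrm{dom}\,U\cap[0,T)\times\mathbb{R}^N$ and every $(p_t,p_x)\in\partial U(t,x)$ one has $-p_t+H(t,x,-p_x)\geq0$. Then for every $(t,x)\in\mathrm{dom}\,U\cap[0,T)\times\mathbb{R}^N$ and every $(n^t,n^x,n^u)\in N_{\mathrm{epi}\,U}(t,x,U(t,x))$ there exist sequences $(t_k,x_k)\to(t,x)$, $\alpha_k\to0$ and $v_k\in\mathrm{dom}\,L(t_k,x_k,\cdot)$ such that $n^t+\langle v_k,n^x\rangle-n^uL(t_k,x_k,v_k)\leq\alpha_k$ for all $k\in\mathbb{N}$.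
   Context: $\mathbb{B}_R$ is the closed ball of radius $R$ at $0$. (H1) $H$ is continuous in all variables. (H2) $H(t,x,p)$ is convex in $p$. (H3) for every $R\geq0$ there is $C_R\geq0$ with $|H(t,x,p)-H(t,x,q)|\leq C_R|p-q|$ for all $t\in[0,T]$, $x\in\mathbb{B}_R$, $p,q$. $H^*(t,x,v)=\sup_p\{\langle v,p\rangle-H(t,x,p)\}$. $\mathrm{dom}\,\varphi=\{z:\varphi(z)\neq\pm\infty\}$, $\mathrm{epi}\,\varphi=\{(z,r):\varphi(z)\leq r\}$; proper means never $-\infty$ and not identically $+\infty$. $U$ is regarded as $+\infty$ outside $[0,T]\times\mathbb{R}^N$. Subderivative: $d\varphi(z)(v)=\liminf_{\tau\to0^+,y\to v}(\varphi(z+\tau y)-\varphi(z))/\tau$; subdifferential $\partial\varphi(z)=\{p:\langle v,p\rangle\leq d\varphi(z)(v)\ \forall v\}$. For $E\subset\mathbb{R}^M$, $w\in E$: $T_E(w)=\{\zeta:\liminf_{\tau\to0^+}\mathrm{dist}(w+\tau\zeta,E)/\tau=0\}$ and $N_E(w)=\{\xi:\langle\zeta,\xi\rangle\leq0\ \forall\zeta\in T_E(w)\}$. *)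

theory Defs
  imports "HOL-Analysis.Analysis" "HOL-Library.Extended_Real"
begin

definition lsc :: "('a::topological_space \<Rightarrow> ereal) \<Rightarrow> bool" where
  "lsc f \<longleftrightarrow> (\<forall>z. f z \<le> Liminf (at z) f)"

definition proper_fun :: "('a \<Rightarrow> ereal) \<Rightarrow> bool" where
  "proper_fun f \<longleftrightarrow> (\<forall>z. f z \<noteq> -\<infinity>) \<and> (\<exists>z. f z \<noteq> \<infinity>)"

definition edom :: "('a \<Rightarrow> ereal) \<Rightarrow> 'a set" where
  "edom f = {z. f z \<noteq> \<infinity> \<and> f z \<noteq> -\<infinity>}"

definition epi :: "('a \<Rightarrow> ereal) \<Rightarrow> ('a \<times> real) set" where
  "epi f = {(z, r). f z \<le> ereal r}"

definition subderiv :: "('a::real_normed_vector \<Rightarrow> ereal) \<Rightarrow> 'a \<Rightarrow> 'a \<Rightarrow> ereal" where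
  "subderiv f z v =
     Liminf (at_right (0::real) \<times>\<^sub>F nhds v)
       (\<lambda>(\<tau>, y). (f (z + \<tau> *\<^sub>R y) - f z) / ereal \<tau>)"

definition subdiff :: "('a::real_inner \<Rightarrow> ereal) \<Rightarrow> 'a \<Rightarrow> 'a set" where
  "subdiff f z = {p. \<forall>v. ereal (inner v p) \<le> subderiv f z v}"

definition tangent_cone :: "'a::real_normed_vector set \<Rightarrow> 'a \<Rightarrow> 'a set" where
  "tangent_cone E w =
     {\<zeta>. Liminf (at_right (0::real)) (\<lambda>\<tau>. ereal (infdist (w + \<tau> *\<^sub>R \<zeta>) E / \<tau>)) = 0}"

definition normal_cone :: "'a::real_inner set \<Rightarrow> 'a \<Rightarrow> 'a set" where
  "normal_cone E w = {\<xi>. \<forall>\<zeta>\<in>tangent_cone E w. inner \<zeta> \<xi> \<le> 0}"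

text \<open>Legendre-Fenchel conjugate in the last variable: L(t,x,v) = H^*(t,x,v)\<close>
definition hconj :: "(real \<Rightarrow> 'a::real_inner \<Rightarrow> 'a \<Rightarrow> real) \<Rightarrow> real \<Rightarrow> 'a \<Rightarrow> 'a \<Rightarrow> ereal" where
  "hconj H t x v = (SUP p. ereal (inner v p - H t x p))"

end

theory Submission
  imports Defs
begin

(* A regular normal (n, nu) to epi U at (z, U z) is a limit of rescaled proximal normals: the
   nearest point of the closed set epi U to (z, U z) + tau (n, nu) is o(tau)-close to (z, U z),
   and when the projection is not horizontal its direction is sigma (p, -1) with sigma > 0 and p a
   regular subgradient of U at a nearby point. Horizontal projections are escaped by lowering the
   projected point in small steps; by Pythagoras this costs little distance, and lower
   semicontinuity forbids every projection to stay horizontal. At such a point the hypothesis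
   gives p_t <= H(t, x, -p_x). An approximate subgradient v of H(t, x, .) at -p_x is bounded by the
   local Lipschitz constant and satisfies L(t, x, v) <= <v, -p_x> - H(t, x, -p_x) + delta, and
   multiplying by sigma ~ -nu gives the inequality up to an error tending to 0. *)

section \<open>Nearest points of epigraphs\<close>

lemma lsc_eventually_nhds_greater:
  fixes U :: "'b::topological_space \<Rightarrow> ereal"
  assumes "lsc U" "c < U z"
  shows "eventually (\<lambda>y. c < U y) (nhds z)"
proof -
  have "c < Liminf (at z) U"
    using assms unfolding lsc_def by (meson order_less_le_trans)
  then show ?thesis
    using assms(2) less_LiminfD eventually_nhds_conv_at by blast
qed

lemma closed_epi:
  fixes U :: "'b::topological_space \<Rightarrow> ereal"
  assumes "lsc U"
  shows "closed (epi U)"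
  unfolding closed_def
proof (subst open_subopen, intro ballI)
  fix w assume "w \<in> - epi U"
  then obtain z r where w: "w = (z, r)" and "ereal r < U z"
    by (cases w) (auto simp: epi_def)
  then obtain r' where r': "r < r'" "ereal r' < U z"
    using ereal_dense2 by force
  then obtain S where S: "open S" "z \<in> S" "\<And>y. y \<in> S \<Longrightarrow> ereal r' < U y"
    using lsc_eventually_nhds_greater[OF assms] unfolding eventually_nhds by metis
  have "S \<times> {..<r'} \<subseteq> - epi U"
  proof
    fix v assume "v \<in> S \<times> {..<r'}"
    then obtain y s where v: "v = (y, s)" "y \<in> S" "s < r'" by auto
    then have "ereal s < ereal r'"
      by simp
    also have "ereal r' < U y"
      using S(3) v(2) .
    finally show "v \<in> - epi U"
      using v by (auto simp: epi_def)
  qed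
  moreover have "open (S \<times> {..<r'})" "w \<in> S \<times> {..<r'}"
    using S w r'(1) by (auto intro: open_Times)
  ultimately show "\<exists>T. open T \<and> w \<in> T \<and> T \<subseteq> - epi U"
    by blast
qed

lemma epi_mono:
  assumes "(z, r) \<in> epi U" "r \<le> s"
  shows "(z, s) \<in> epi U"
  using assms by (auto simp: epi_def order_trans)

lemma nearest_point_proximal_ineq:
  fixes y w1 :: "'a::real_inner"
  assumes "\<And>w. w \<in> E \<Longrightarrow> dist y w1 \<le> dist y w" "w \<in> E"
  shows "2 * inner (y - w1) (w - w1) \<le> (norm (w - w1))\<^sup>2"
proof -
  have "(norm (y - w1))\<^sup>2 \<le> (norm (y - w))\<^sup>2"
    using assms by (intro power_mono) (simp_all add: dist_norm)
  moreover have "2 * inner (y - w1) (w - w1) = (norm (y - w1))\<^sup>2 + (norm (w - w1))\<^sup>2 - (norm (y - w))\<^sup>2"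
    using dot_norm_neg[of "y - w1" "w - w1"] by simp
  ultimately show ?thesis
    by linarith
qed

lemma epi_nearest_point_ineq:
  fixes U :: "'b::real_inner \<Rightarrow> ereal"
  assumes "\<And>w. w \<in> epi U \<Longrightarrow> dist (a, s) (z1, r1) \<le> dist (a, s) w" "(z, r) \<in> epi U"
  shows "2 * inner (a - z1) (z - z1) + 2 * (s - r1) * (r - r1) \<le> (norm (z - z1))\<^sup>2 + (r - r1)\<^sup>2"
  using nearest_point_proximal_ineq[OF assms]
  by (simp add: norm_Pair algebra_simps)

lemma epi_nearest_point_above:
  fixes U :: "'b::real_inner \<Rightarrow> ereal"
  assumes "(z1, r1) \<in> epi U" "\<And>w. w \<in> epi U \<Longrightarrow> dist (a, s) (z1, r1) \<le> dist (a, s) w"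
  shows "s \<le> r1"
proof (rule ccontr)
  assume "\<not> s \<le> r1"
  then have "(z1, s) \<in> epi U"
    using assms(1) by (auto intro: epi_mono)
  from epi_nearest_point_ineq[OF assms(2) this] \<open>\<not> s \<le> r1\<close> show False
    by (simp add: power2_eq_square)
qed

lemma epi_nearest_point_on_graph:
  fixes U :: "'b::real_inner \<Rightarrow> ereal"
  assumes "\<And>z. U z \<noteq> -\<infinity>" "(z1, r1) \<in> epi U"
    and "\<And>w. w \<in> epi U \<Longrightarrow> dist (a, s) (z1, r1) \<le> dist (a, s) w" "s < r1"
  shows "U z1 = ereal r1"
proof (rule ccontr)
  assume "U z1 \<noteq> ereal r1"
  moreover have "U z1 \<le> ereal r1"
    using assms(2) by (simp add: epi_def)
  ultimately obtain u where u: "U z1 = ereal u" "u < r1"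
    using assms(1)[of z1] by (cases "U z1") auto
  define m where "m = min (r1 - s) (r1 - u)"
  have m: "0 < m" "m \<le> r1 - s" "m \<le> r1 - u"
    using u assms(4) by (auto simp: m_def)
  then have "(z1, r1 - m) \<in> epi U"
    using u by (simp add: epi_def)
  from epi_nearest_point_ineq[OF assms(3) this]
  have "2 * (r1 - s) * m \<le> m * m"
    by (simp add: power2_eq_square algebra_simps)
  moreover have "m * m \<le> (r1 - s) * m"
    using m by (simp add: mult_right_mono)
  moreover have "0 < (r1 - s) * m"
    using m assms(4) by simp
  ultimately show False
    by linarith
qed

lemma proximal_subgradient_in_subdiff:
  fixes U :: "'b::real_inner \<Rightarrow> ereal"
  assumes "U z = ereal u" "0 < \<rho>"
    and "\<And>h. norm h < \<rho> \<Longrightarrow> ereal (u + inner h p - c * (norm h)\<^sup>2) \<le> U (z + h)"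
  shows "p \<in> subdiff U z"
  unfolding subdiff_def subderiv_def
proof safe
  fix v :: 'b
  let ?F = "at_right (0::real) \<times>\<^sub>F nhds v"
  have fst_lim: "(fst \<longlongrightarrow> 0) ?F"
    using filterlim_fst[of "at_right (0::real)" "nhds v"]
    by (rule filterlim_mono) (auto simp: at_within_def)
  have snd_lim: "(snd \<longlongrightarrow> v) ?F"
    by (rule filterlim_snd)
  show "ereal (inner v p) \<le> Liminf ?F (\<lambda>(\<tau>, y). (U (z + \<tau> *\<^sub>R y) - U z) / ereal \<tau>)"
  proof (subst le_Liminf_iff, safe)
    fix e assume "e < ereal (inner v p)"
    then obtain e' where e': "e < ereal e'" "e' < inner v p"
      using ereal_dense2 by force
    have "((\<lambda>w. inner (snd w) p - c * fst w * (norm (snd w))\<^sup>2) \<longlongrightarrow> inner v p - c * 0 * (norm v)\<^sup>2) ?F"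
      by (intro tendsto_intros fst_lim snd_lim)
    then have ev_quot: "eventually (\<lambda>w. e' < inner (snd w) p - c * fst w * (norm (snd w))\<^sup>2) ?F"
      using e'(2) by (simp add: order_tendstoD(1))
    have "((\<lambda>w. norm (fst w *\<^sub>R snd w)) \<longlongrightarrow> norm (0 *\<^sub>R v)) ?F"
      by (intro tendsto_intros fst_lim snd_lim)
    then have ev_small: "eventually (\<lambda>w. norm (fst w *\<^sub>R snd w) < \<rho>) ?F"
      using assms(2) by (simp add: order_tendstoD(2))
    have ev_pos: "eventually (\<lambda>w. 0 < fst w) ?F"
      using filterlim_fst[of "at_right (0::real)" "nhds v"] eventually_at_right_less[of "0::real"]
      by (simp add: filterlim_iff)
    show "eventually (\<lambda>w. e < (case w of (\<tau>, y) \<Rightarrow> (U (z + \<tau> *\<^sub>R y) - U z) / ereal \<tau>)) ?F"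
      using ev_quot ev_small ev_pos
    proof eventually_elim
      case (elim w)
      obtain \<tau> y where w: "w = (\<tau>, y)" by (cases w)
      have \<tau>: "0 < \<tau>" using elim w by simp
      have "ereal (u + \<tau> * (inner y p - c * \<tau> * (norm y)\<^sup>2)) \<le> U (z + \<tau> *\<^sub>R y)"
        using assms(3)[of "\<tau> *\<^sub>R y"] elim w \<tau>
        by (simp add: power_mult_distrib power2_eq_square algebra_simps)
      moreover have "e' < inner y p - c * \<tau> * (norm y)\<^sup>2"
        using elim w by simp
      ultimately have "ereal (u + \<tau> * e') \<le> U (z + \<tau> *\<^sub>R y)"
        using \<tau> by (smt (verit) ereal_less_eq(3) mult_strict_left_mono order_trans)
      then have "ereal e' \<le> (U (z + \<tau> *\<^sub>R y) - U z) / ereal \<tau>"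
        using \<tau> assms(1)
        by (cases "U (z + \<tau> *\<^sub>R y)") (auto simp: field_simps)
      then show ?case
        using w e'(1) by auto
    qed
  qed
qed

lemma epi_nearest_point_subdiff:
  fixes U :: "'b::real_inner \<Rightarrow> ereal"
  assumes proper: "\<And>z. U z \<noteq> -\<infinity>" and "(z1, r1) \<in> epi U"
    and nearest: "\<And>w. w \<in> epi U \<Longrightarrow> dist (a, s) (z1, r1) \<le> dist (a, s) w" and "s < r1"
  shows "(1 / (r1 - s)) *\<^sub>R (a - z1) \<in> subdiff U z1"
proof -
  define \<mu> where "\<mu> = r1 - s"
  define p where "p = (1 / \<mu>) *\<^sub>R (a - z1)"
  define c where "c = (1 + (norm p)\<^sup>2) / \<mu>"
  have \<mu>: "0 < \<mu>" using \<open>s < r1\<close> by (simp add: \<mu>_def)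
  then have a_z1: "a - z1 = \<mu> *\<^sub>R p" and c: "0 < c" "\<mu> * c = 1 + (norm p)\<^sup>2"
    by (simp_all add: p_def c_def add_pos_nonneg)
  \<comment> \<open>the nearest-point inequality forbids epigraph points below this quadratic minorant\<close>
  have "ereal (r1 + inner h p - c * (norm h)\<^sup>2) \<le> U (z1 + h)" if h: "norm h < 1 / (2 * c)" for h
  proof (rule ccontr)
    define N where "N = (norm h)\<^sup>2"
    define D where "D = inner h p - c * N"
    assume below: "\<not> ?thesis"
    then have "(z1 + h, r1 + D) \<in> epi U"
      by (simp add: epi_def D_def N_def add_diff_eq)
    from epi_nearest_point_ineq[OF nearest this]
    have "2 * (\<mu> * c) * N \<le> N + D\<^sup>2"
      by (simp add: a_z1 D_def N_def \<mu>_def inner_commute algebra_simps)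
    moreover have "D\<^sup>2 \<le> 2 * (inner h p)\<^sup>2 + 2 * (c * N)\<^sup>2"
      using sum_squares_ge_zero[of "inner h p + c * N" 0] by (simp add: D_def power2_eq_square algebra_simps)
    moreover have "(inner h p)\<^sup>2 \<le> N * (norm p)\<^sup>2"
      using Cauchy_Schwarz_ineq[of h p] by (simp add: N_def power2_norm_eq_inner)
    ultimately have "N \<le> N * (2 * c\<^sup>2 * N)"
      using c(2) by (simp add: power2_eq_square algebra_simps)
    moreover have "2 * c\<^sup>2 * N < 1"
    proof -
      have "N < (1 / (2 * c))\<^sup>2"
        using h by (simp add: N_def power_strict_mono)
      then show ?thesis
        using c(1) by (simp add: power2_eq_square field_simps)
    qed
    moreover have "0 < N"
      using below epi_nearest_point_on_graph[OF proper assms(2) nearest \<open>s < r1\<close>]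
      by (cases "h = 0") (auto simp: N_def)
    ultimately show False
      by (simp add: mult_le_cancel_left1)
  qed
  moreover have "U z1 = ereal r1"
    by (rule epi_nearest_point_on_graph[OF assms])
  ultimately have "p \<in> subdiff U z1"
    using c(1) by (intro proximal_subgradient_in_subdiff[of _ _ r1 "1 / (2 * c)" _ c]) auto
  then show ?thesis
    by (simp add: p_def \<mu>_def)
qed

lemma power2_dist_Pair: "(dist (x, s) w)\<^sup>2 = (dist x (fst w))\<^sup>2 + (dist s (snd w))\<^sup>2"
  by (cases w) (simp add: dist_Pair_Pair)

lemma epi_nearest_point_nonhorizontal:
  fixes U :: "'b::euclidean_space \<Rightarrow> ereal" and m :: nat
  assumes closed: "closed (epi U)" and zb: "(zb, ub) \<in> epi U"
    and high: "\<And>z. dist z zb < \<rho> \<Longrightarrow> ereal (c - B) < U z"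
    and m: "0 < m" and B: "0 \<le> B"
    and R: "(dist (a, c) (zb, ub))\<^sup>2 + B\<^sup>2 / m \<le> R\<^sup>2" "0 \<le> R" "norm (a - zb) + R < \<rho>"
  shows "\<exists>\<beta> z1 r1. 0 \<le> \<beta> \<and> (z1, r1) \<in> epi U \<and>
           (\<forall>w\<in>epi U. dist (a, c - \<beta>) (z1, r1) \<le> dist (a, c - \<beta>) w) \<and> c - \<beta> < r1 \<and>
           (dist (a, c - \<beta>) (z1, r1))\<^sup>2 \<le> (dist (a, c) (zb, ub))\<^sup>2 + B\<^sup>2 / m"
proof -
  \<comment> \<open>Lower (a, c) in m steps of size B / m. While the projections W i stay horizontal, each step
    adds at most (B / m)^2 to the squared distance (Pythagoras); if all of them were horizontal,
    W m would be a point of epi U at height c - B within distance \<rho> of zb, contradicting high.\<close>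
  define y where "y i = c - real i * B / m" for i :: nat
  have "epi U \<noteq> {}"
    using zb by blast
  then have "\<exists>w. w \<in> epi U \<and> (\<forall>w'\<in>epi U. dist (a, y i) w \<le> dist (a, y i) w')" for i
    using distance_attains_inf[OF closed, of "(a, y i)"] by metis
  then obtain W where W: "\<forall>i. W i \<in> epi U \<and> (\<forall>w\<in>epi U. dist (a, y i) (W i) \<le> dist (a, y i) w)"
    using choice[of "\<lambda>i w. w \<in> epi U \<and> (\<forall>w'\<in>epi U. dist (a, y i) w \<le> dist (a, y i) w')"] by blast
  then have W_epi: "\<And>i. W i \<in> epi U"
    and W_nearest: "\<And>i w. w \<in> epi U \<Longrightarrow> dist (a, y i) (W i) \<le> dist (a, y i) w"
    by blast+
  define D where "D i = dist (a, y i) (W i)" for i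
  define hor where "hor i \<longleftrightarrow> snd (W i) = y i" for i
  have D_hor: "D i = dist a (fst (W i))" if "hor i" for i
    using that power2_dist_Pair[of a "y i" "W i"] by (simp add: D_def hor_def)
  have D_step: "(D (Suc i))\<^sup>2 \<le> (D i)\<^sup>2 + (B / m)\<^sup>2" if "hor i" for i
  proof -
    have "D (Suc i) \<le> dist (a, y (Suc i)) (W i)"
      unfolding D_def by (rule W_nearest[OF W_epi])
    then have "(D (Suc i))\<^sup>2 \<le> (dist (a, y (Suc i)) (W i))\<^sup>2"
      by (simp add: D_def power_mono)
    also have "\<dots> = (D i)\<^sup>2 + (y i - y (Suc i))\<^sup>2"
      using that by (simp add: power2_dist_Pair D_hor hor_def dist_real_def power2_commute)
    also have "y i - y (Suc i) = B / m"
      by (simp add: y_def add_divide_distrib algebra_simps)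
    finally show ?thesis .
  qed
  have D_0: "(D 0)\<^sup>2 \<le> (dist (a, c) (zb, ub))\<^sup>2"
    using W_nearest[OF zb, of 0] by (simp add: D_def y_def power_mono)
  have D_le: "(D i)\<^sup>2 \<le> (dist (a, c) (zb, ub))\<^sup>2 + B\<^sup>2 / m" if "i \<le> m" "\<forall>j<i. hor j" for i
  proof -
    have "(D i)\<^sup>2 \<le> (dist (a, c) (zb, ub))\<^sup>2 + real i * (B / m)\<^sup>2"
      using that(2)
    proof (induction i)
      case 0
      then show ?case using D_0 by simp
    next
      case (Suc i)
      then show ?case using D_step[of i] by (simp add: algebra_simps)
    qed
    also have "real i * (B / m)\<^sup>2 \<le> real m * (B / m)\<^sup>2"
      using that(1) by (simp add: mult_right_mono)
    finally show ?thesis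
      using m by (simp add: power2_eq_square)
  qed
  show ?thesis
  proof (cases "\<exists>j\<le>m. \<not> hor j")
    case True
    then obtain j where j: "\<not> hor j" "\<forall>i<j. hor i" "j \<le> m"
      using exists_least_iff[of "\<lambda>j. \<not> hor j"] by (meson le_trans not_le_imp_less)
    have "y j \<le> snd (W j)"
      using epi_nearest_point_above[of "fst (W j)" "snd (W j)" U a "y j"] W_epi W_nearest by simp
    then have "c - real j * B / m < snd (W j)"
      using j(1) by (simp add: hor_def y_def)
    moreover have "0 \<le> real j * B / m"
      using B by simp
    ultimately show ?thesis
      using W_epi[of j] W_nearest[of _ j] D_le[OF j(3,2)]
      by (intro exI[of _ "real j * B / m"] exI[of _ "fst (W j)"] exI[of _ "snd (W j)"])
        (simp add: D_def y_def)
  next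
    case False
    then have "hor m"
      by blast
    have "(D m)\<^sup>2 \<le> R\<^sup>2"
      using D_le[of m] R(1) False by auto
    then have "dist a (fst (W m)) \<le> R"
      using D_hor[OF \<open>hor m\<close>] power2_le_imp_le[OF _ R(2)] by simp
    moreover have "dist (fst (W m)) zb \<le> dist a (fst (W m)) + norm (a - zb)"
      using dist_triangle3[of "fst (W m)" zb a] by (simp add: dist_norm)
    ultimately have "dist (fst (W m)) zb < \<rho>"
      using R(3) by linarith
    then have "ereal (c - B) < U (fst (W m))"
      by (rule high)
    moreover have "U (fst (W m)) \<le> ereal (snd (W m))"
      using W_epi[of m] by (cases "W m") (simp add: epi_def)
    moreover have "snd (W m) = c - B"
      using \<open>hor m\<close> m by (simp add: hor_def y_def)
    ultimately show ?thesis
      by (simp add: leD)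
  qed
qed

section \<open>Regular normals to epigraphs\<close>

lemma tangent_coneI_sequentially:
  fixes E :: "'c::real_normed_vector set"
  assumes s: "\<And>j. 0 < s j" "s \<longlonglongrightarrow> 0" and d: "d \<longlonglongrightarrow> l"
    and E: "\<And>j. w0 + s j *\<^sub>R d j \<in> E"
  shows "l \<in> tangent_cone E w0"
  unfolding tangent_cone_def
proof (safe, rule antisym)
  let ?q = "\<lambda>\<tau>. ereal (infdist (w0 + \<tau> *\<^sub>R l) E / \<tau>)"
  show "0 \<le> Liminf (at_right 0) ?q"
  proof (rule Liminf_bounded)
    show "eventually (\<lambda>\<tau>. 0 \<le> ?q \<tau>) (at_right 0)"
      using eventually_at_right_less[of "0::real"]
      by eventually_elim (simp add: infdist_nonneg)
  qed
  show "Liminf (at_right 0) ?q \<le> 0"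
  proof (rule ccontr)
    assume "\<not> ?thesis"
    then have "0 < Liminf (at_right 0) ?q"
      by simp
    then obtain e where e: "0 < ereal e" "ereal e < Liminf (at_right 0) ?q"
      using ereal_dense2 by blast
    have "\<forall>j. s j \<noteq> 0 \<and> s j \<in> {0<..}"
      using s(1) by (simp add: less_imp_neq[symmetric])
    then have "filterlim s (at_right 0) sequentially"
      unfolding filterlim_at using s(2) by (simp add: always_eventually)
    with less_LiminfD[OF e(2)] have "eventually (\<lambda>j. ereal e < ?q (s j)) sequentially"
      by (rule eventually_compose_filterlim)
    moreover have "eventually (\<lambda>j. norm (l - d j) < e) sequentially"
      using e(1) tendsto_norm[OF tendsto_diff[OF tendsto_const d], of l]
      by (simp add: order_tendstoD(2))
    ultimately have "eventually (\<lambda>j. False) sequentially"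
    proof eventually_elim
      case (elim j)
      have "infdist (w0 + s j *\<^sub>R l) E \<le> dist (w0 + s j *\<^sub>R l) (w0 + s j *\<^sub>R d j)"
        by (rule infdist_le[OF E])
      also have "\<dots> = s j * norm (l - d j)"
        using s(1)[of j] by (simp add: dist_norm scaleR_diff_right[symmetric])
      finally have "infdist (w0 + s j *\<^sub>R l) E / s j \<le> norm (l - d j)"
        using s(1)[of j] by (simp add: divide_le_eq mult.commute)
      then show False
        using elim by simp
    qed
    then show False
      by simp
  qed
qed

lemma normal_cone_limit_direction_eq_0:
  fixes E :: "'c::real_inner set"
  assumes \<xi>: "\<xi> \<in> normal_cone E w0"
    and s: "\<And>j. 0 < s j" "s \<longlonglongrightarrow> 0" and d: "d \<longlonglongrightarrow> l"
    and E: "\<And>j. w0 + s j *\<^sub>R d j \<in> E"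
    and close: "\<And>j. (norm (\<xi> - d j))\<^sup>2 \<le> (norm \<xi>)\<^sup>2 + \<eta> j" and \<eta>: "\<eta> \<longlonglongrightarrow> 0"
  shows "l = 0"
proof -
  have "inner l \<xi> \<le> 0"
    using \<xi> tangent_coneI_sequentially[OF s d E] by (simp add: normal_cone_def)
  moreover have "(norm (\<xi> - l))\<^sup>2 \<le> (norm \<xi>)\<^sup>2"
  proof (rule LIMSEQ_le)
    show "(\<lambda>j. (norm (\<xi> - d j))\<^sup>2) \<longlonglongrightarrow> (norm (\<xi> - l))\<^sup>2"
      by (intro tendsto_intros d)
    show "(\<lambda>j. (norm \<xi>)\<^sup>2 + \<eta> j) \<longlonglongrightarrow> (norm \<xi>)\<^sup>2"
      using tendsto_add[OF tendsto_const \<eta>] by simp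
  qed (use close in auto)
  moreover have "2 * inner l \<xi> = (norm \<xi>)\<^sup>2 + (norm l)\<^sup>2 - (norm (\<xi> - l))\<^sup>2"
    using dot_norm_neg[of \<xi> l] by (simp add: inner_commute)
  ultimately have "(norm l)\<^sup>2 \<le> 0"
    by linarith
  then show ?thesis
    by simp
qed

lemma normal_cone_nearby_points:
  fixes E :: "'c::euclidean_space set"
  assumes \<xi>: "\<xi> \<in> normal_cone E w0" and "0 < \<epsilon>"
  shows "\<exists>\<delta>>0. \<forall>\<tau> w. 0 < \<tau> \<longrightarrow> \<tau> < \<delta> \<longrightarrow> w \<in> E \<longrightarrow>
           (norm (w0 + \<tau> *\<^sub>R \<xi> - w))\<^sup>2 \<le> \<tau>\<^sup>2 * ((norm \<xi>)\<^sup>2 + \<delta>) \<longrightarrow> norm (w - w0) \<le> \<epsilon> * \<tau>"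
proof (rule ccontr)
  define \<eta> where "\<eta> j = 1 / real (Suc j)" for j
  define bad where "bad j \<tau> w \<longleftrightarrow> 0 < \<tau> \<and> \<tau> < \<eta> j \<and> w \<in> E \<and>
      (norm (w0 + \<tau> *\<^sub>R \<xi> - w))\<^sup>2 \<le> \<tau>\<^sup>2 * ((norm \<xi>)\<^sup>2 + \<eta> j) \<and> \<epsilon> * \<tau> < norm (w - w0)"
    for j \<tau> w
  assume "\<not> ?thesis"
  then have "\<forall>j. \<exists>\<tau> w. bad j \<tau> w"
    by (auto simp: not_le \<eta>_def bad_def)
  then obtain \<tau> w where "\<And>j. bad j (\<tau> j) (w j)"
    by metis
  then have \<tau>: "\<And>j. 0 < \<tau> j" "\<And>j. \<tau> j < \<eta> j"
    and w: "\<And>j. w j \<in> E" "\<And>j. (norm (w0 + \<tau> j *\<^sub>R \<xi> - w j))\<^sup>2 \<le> (\<tau> j)\<^sup>2 * ((norm \<xi>)\<^sup>2 + \<eta> j)"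
      "\<And>j. \<epsilon> * \<tau> j < norm (w j - w0)"
    by (simp_all add: bad_def)
  define d where "d j = (1 / \<tau> j) *\<^sub>R (w j - w0)" for j
  have w_d: "w j = w0 + \<tau> j *\<^sub>R d j" for j
    using \<tau>(1)[of j] by (simp add: d_def)
  have d_close: "(norm (\<xi> - d j))\<^sup>2 \<le> (norm \<xi>)\<^sup>2 + \<eta> j" for j
  proof -
    have "(\<tau> j)\<^sup>2 * (norm (\<xi> - d j))\<^sup>2 = (norm (w0 + \<tau> j *\<^sub>R \<xi> - w j))\<^sup>2"
      using \<tau>(1)[of j] by (simp add: w_d power_mult_distrib scaleR_diff_right[symmetric])
    then have "(\<tau> j)\<^sup>2 * (norm (\<xi> - d j))\<^sup>2 \<le> (\<tau> j)\<^sup>2 * ((norm \<xi>)\<^sup>2 + \<eta> j)"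
      using w(2)[of j] by simp
    then show ?thesis
      using \<tau>(1)[of j] by (simp add: mult_le_cancel_left_pos)
  qed
  have d_large: "\<epsilon> < norm (d j)" for j
    using w(3)[of j] \<tau>(1)[of j] by (simp add: w_d)
  have "norm (d j) \<le> 2 * norm \<xi> + 1" for j
  proof -
    have "\<eta> j \<le> 1"
      by (simp add: \<eta>_def)
    moreover have "(norm \<xi> + 1)\<^sup>2 = (norm \<xi>)\<^sup>2 + 1 + 2 * norm \<xi>"
      by (simp add: power2_sum)
    ultimately have "(norm (\<xi> - d j))\<^sup>2 \<le> (norm \<xi> + 1)\<^sup>2"
      using d_close[of j] norm_ge_zero[of \<xi>] by linarith
    then have "norm (\<xi> - d j) \<le> norm \<xi> + 1"
      by (rule power2_le_imp_le) simp
    then show ?thesis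
      using norm_triangle_sub[of "d j" \<xi>] by (simp add: norm_minus_commute)
  qed
  then have "bounded (range d)"
    unfolding bounded_iff by blast
  then obtain l r where r: "strict_mono r" and lim: "(d \<circ> r) \<longlonglongrightarrow> l"
    using bounded_imp_convergent_subsequence by blast
  have \<eta>_0: "\<eta> \<longlonglongrightarrow> 0"
    unfolding \<eta>_def using LIMSEQ_Suc[OF lim_1_over_n] by simp
  have "\<tau> \<longlonglongrightarrow> 0"
    using \<tau> by (intro tendsto_sandwich[OF _ _ tendsto_const \<eta>_0]) (simp_all add: less_imp_le always_eventually)
  have "l = 0"
  proof (rule normal_cone_limit_direction_eq_0[OF \<xi>])
    show "(\<tau> \<circ> r) \<longlonglongrightarrow> 0" "(\<eta> \<circ> r) \<longlonglongrightarrow> 0"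
      using LIMSEQ_subseq_LIMSEQ[OF _ r] \<open>\<tau> \<longlonglongrightarrow> 0\<close> \<eta>_0 by blast+
  qed (use \<tau>(1) lim w(1) w_d d_close in auto)
  moreover have "\<epsilon> \<le> norm l"
    using d_large by (intro LIMSEQ_le_const[OF tendsto_norm[OF lim]]) (auto intro: less_imp_le)
  ultimately show False
    using \<open>0 < \<epsilon>\<close> by simp
qed

lemma normal_cone_epi_nearest_point:
  fixes U :: "'b::euclidean_space \<Rightarrow> ereal"
  assumes lsc: "lsc U" and Ub: "U zb = ereal ub"
    and normal: "(n, nu) \<in> normal_cone (epi U) (zb, ub)" and "0 < \<epsilon>"
  shows "\<exists>\<tau> \<beta> z1 r1. 0 < \<tau> \<and> \<tau> \<le> 1 \<and> 0 \<le> \<beta> \<and> (z1, r1) \<in> epi U \<and>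
           (\<forall>w\<in>epi U. dist (zb + \<tau> *\<^sub>R n, ub + \<tau> * nu - \<beta>) (z1, r1)
                         \<le> dist (zb + \<tau> *\<^sub>R n, ub + \<tau> * nu - \<beta>) w) \<and>
           ub + \<tau> * nu - \<beta> < r1 \<and> norm ((z1, r1 + \<beta>) - (zb, ub)) \<le> \<epsilon> * \<tau>"
proof -
  define \<xi> where "\<xi> = (n, nu)"
  obtain \<delta> where \<delta>: "0 < \<delta>" and nearby: "\<And>\<tau> w. 0 < \<tau> \<Longrightarrow> \<tau> < \<delta> \<Longrightarrow> w \<in> epi U \<Longrightarrow>
      (norm ((zb, ub) + \<tau> *\<^sub>R \<xi> - w))\<^sup>2 \<le> \<tau>\<^sup>2 * ((norm \<xi>)\<^sup>2 + \<delta>) \<Longrightarrow> norm (w - (zb, ub)) \<le> \<epsilon> * \<tau>"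
    using normal_cone_nearby_points[OF normal \<open>0 < \<epsilon>\<close>] unfolding \<xi>_def by blast
  have "ereal (ub - 1) < U zb"
    using Ub by simp
  then obtain \<rho> where \<rho>: "0 < \<rho>" and high: "\<And>z. dist z zb < \<rho> \<Longrightarrow> ereal (ub - 1) < U z"
    using lsc_eventually_nhds_greater[OF lsc] unfolding eventually_nhds_metric
    by (metis dist_commute)
  \<comment> \<open>\<tau> keeps the projection inside the ball where U > ub - 1, the descent by B reaches below
    that level, and m makes the extra squared distance B^2 / m at most \<tau>^2 min \<delta> 1.\<close>
  define \<tau> where "\<tau> = min (\<delta> / 2) (min 1 (\<rho> / (2 * norm \<xi> + 2)))"
  have "\<tau> \<le> \<delta> / 2" "\<tau> \<le> \<rho> / (2 * norm \<xi> + 2)"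
    unfolding \<tau>_def by linarith+
  then have \<tau>: "0 < \<tau>" "\<tau> < \<delta>" "\<tau> \<le> 1" "\<tau> * (2 * norm \<xi> + 2) \<le> \<rho>"
    using \<delta> \<rho> by (simp_all add: \<tau>_def pos_le_divide_eq add_nonneg_pos)
  define a where "a = zb + \<tau> *\<^sub>R n"
  define c where "c = ub + \<tau> * nu"
  define B where "B = 1 + \<bar>\<tau> * nu\<bar>"
  define K where "K = \<tau>\<^sup>2 * min \<delta> 1"
  have K: "0 < K" "K \<le> \<tau>\<^sup>2 * \<delta>" "K \<le> \<tau>\<^sup>2"
    using \<tau>(1) \<delta> by (simp_all add: K_def mult_left_mono)
  obtain m :: nat where m: "B\<^sup>2 / K < m"
    using reals_Archimedean2 by blast
  moreover have "0 \<le> B\<^sup>2 / K"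
    using K(1) by simp
  ultimately have "0 < m"
    by linarith
  have B_m: "B\<^sup>2 / m \<le> K"
    using m K(1) \<open>0 < m\<close> by (simp add: field_simps)
  have "(a, c) - (zb, ub) = \<tau> *\<^sub>R \<xi>"
    by (simp add: a_def c_def \<xi>_def)
  then have dist_ac: "dist (a, c) (zb, ub) = \<tau> * norm \<xi>"
    using \<tau>(1) by (simp add: dist_norm)
  have "(\<tau> * norm \<xi>)\<^sup>2 + \<tau>\<^sup>2 \<le> (\<tau> * (norm \<xi> + 1))\<^sup>2"
    using \<tau>(1) by (simp add: power2_eq_square algebra_simps)
  then have R: "(dist (a, c) (zb, ub))\<^sup>2 + B\<^sup>2 / m \<le> (\<tau> * (norm \<xi> + 1))\<^sup>2"
    using B_m K(3) unfolding dist_ac by linarith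
  have "norm (a - zb) \<le> \<tau> * norm \<xi>"
    using \<tau>(1) norm_fst_le[of n nu] by (simp add: a_def \<xi>_def)
  moreover have "\<tau> * norm \<xi> + \<tau> * (norm \<xi> + 1) < \<tau> * (2 * norm \<xi> + 2)"
    using \<tau>(1) by (simp add: algebra_simps)
  ultimately have R_small: "norm (a - zb) + \<tau> * (norm \<xi> + 1) < \<rho>"
    using \<tau>(4) by linarith
  have "c - B \<le> ub - 1"
    by (simp add: B_def c_def)
  then have "ereal (c - B) < U z" if "dist z zb < \<rho>" for z
    using high[OF that] by (meson ereal_less_eq(3) order_le_less_trans)
  from epi_nearest_point_nonhorizontal[OF closed_epi[OF lsc] _ this \<open>0 < m\<close> _ R _ R_small]
  obtain \<beta> z1 r1 where \<beta>: "0 \<le> \<beta>" and z1: "(z1, r1) \<in> epi U"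
    and nearest: "\<forall>w\<in>epi U. dist (a, c - \<beta>) (z1, r1) \<le> dist (a, c - \<beta>) w"
    and above: "c - \<beta> < r1" and close: "(dist (a, c - \<beta>) (z1, r1))\<^sup>2 \<le> (dist (a, c) (zb, ub))\<^sup>2 + B\<^sup>2 / m"
    using Ub \<tau>(1) by (auto simp: epi_def B_def)
  have "(norm ((zb, ub) + \<tau> *\<^sub>R \<xi> - (z1, r1 + \<beta>)))\<^sup>2 = (dist (a, c - \<beta>) (z1, r1))\<^sup>2"
    by (simp add: \<xi>_def a_def c_def dist_norm algebra_simps)
  also have "\<dots> \<le> \<tau>\<^sup>2 * ((norm \<xi>)\<^sup>2 + \<delta>)"
    using close B_m K(2) by (simp add: dist_ac power_mult_distrib distrib_left)
  finally have "norm ((z1, r1 + \<beta>) - (zb, ub)) \<le> \<epsilon> * \<tau>"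
    using z1 \<beta> by (intro nearby[OF \<tau>(1,2)]) (simp_all add: epi_mono)
  then show ?thesis
    using \<tau>(1,3) \<beta> z1 nearest above unfolding a_def c_def
    by (intro exI[of _ \<tau>] exI[of _ \<beta>] exI[of _ z1] exI[of _ r1]) simp
qed

lemma normal_cone_epi_approx_subdiff:
  fixes U :: "'b::euclidean_space \<Rightarrow> ereal"
  assumes lsc: "lsc U" and proper: "\<And>z. U z \<noteq> -\<infinity>" and Ub: "U zb = ereal ub"
    and normal: "(n, nu) \<in> normal_cone (epi U) (zb, ub)" and "0 < \<epsilon>"
  shows "\<exists>z p \<sigma>. z \<in> edom U \<and> p \<in> subdiff U z \<and> 0 < \<sigma> \<and>
           norm (z - zb) \<le> \<epsilon> \<and> norm (\<sigma> *\<^sub>R (p, -1) - (n, nu)) \<le> \<epsilon>"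
proof -
  obtain \<tau> \<beta> z1 r1 where \<tau>: "0 < \<tau>" "\<tau> \<le> 1" and z1: "(z1, r1) \<in> epi U"
    and nearest: "\<And>w. w \<in> epi U \<Longrightarrow> dist (zb + \<tau> *\<^sub>R n, ub + \<tau> * nu - \<beta>) (z1, r1)
                                    \<le> dist (zb + \<tau> *\<^sub>R n, ub + \<tau> * nu - \<beta>) w"
    and above: "ub + \<tau> * nu - \<beta> < r1"
    and close: "norm ((z1, r1 + \<beta>) - (zb, ub)) \<le> \<epsilon> * \<tau>"
    using normal_cone_epi_nearest_point[OF lsc Ub normal \<open>0 < \<epsilon>\<close>] by blast
  define \<mu> where "\<mu> = r1 - (ub + \<tau> * nu - \<beta>)"
  define p where "p = (1 / \<mu>) *\<^sub>R (zb + \<tau> *\<^sub>R n - z1)"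
  have \<mu>: "0 < \<mu>"
    using above by (simp add: \<mu>_def)
  have "p \<in> subdiff U z1"
    unfolding p_def \<mu>_def by (rule epi_nearest_point_subdiff[OF proper z1 nearest above])
  moreover have "z1 \<in> edom U"
    using epi_nearest_point_on_graph[OF proper z1 nearest above] by (simp add: edom_def)
  moreover have "0 < \<mu> / \<tau>"
    using \<mu> \<tau>(1) by simp
  moreover have "norm (z1 - zb) \<le> \<epsilon>"
    using close norm_fst_le[of "z1 - zb" "r1 + \<beta> - ub"] \<tau> \<open>0 < \<epsilon>\<close>
    by (simp add: mult_left_le order_trans)
  moreover have "norm ((\<mu> / \<tau>) *\<^sub>R (p, -1) - (n, nu)) \<le> \<epsilon>"
  proof -
    have "(\<mu> / \<tau>) *\<^sub>R p = (1 / \<tau>) *\<^sub>R (zb - z1) + n"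
      using \<mu> \<tau>(1) by (simp add: p_def scaleR_add_right diff_add_eq[symmetric])
    moreover have "- (\<mu> / \<tau>) - nu = - (1 / \<tau>) * (r1 + \<beta> - ub)"
      using \<tau>(1) by (simp add: \<mu>_def field_simps)
    ultimately have "(\<mu> / \<tau>) *\<^sub>R (p, -1) - (n, nu) = (- 1 / \<tau>) *\<^sub>R ((z1, r1 + \<beta>) - (zb, ub))"
      by (simp add: scaleR_diff_right)
    then have "norm ((\<mu> / \<tau>) *\<^sub>R (p, -1) - (n, nu)) = norm ((z1, r1 + \<beta>) - (zb, ub)) / \<tau>"
      using \<tau>(1) by (simp only: norm_scaleR) simp
    also have "\<dots> \<le> \<epsilon>"
      using close \<tau>(1) by (simp add: divide_le_eq)
    finally show ?thesis .
  qed
  ultimately show ?thesis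
    by blast
qed

lemma normal_cone_epi_limit_subdiff:
  fixes U :: "'b::euclidean_space \<Rightarrow> ereal"
  assumes lsc: "lsc U" and proper: "\<And>z. U z \<noteq> -\<infinity>" and Ub: "U zb = ereal ub"
    and normal: "(n, nu) \<in> normal_cone (epi U) (zb, ub)" and S: "open S" "zb \<in> S"
  shows "\<exists>z p \<sigma>. z \<longlonglongrightarrow> zb \<and> (\<lambda>k. \<sigma> k *\<^sub>R (p k, -1)) \<longlonglongrightarrow> (n, nu) \<and>
           (\<forall>k. z k \<in> S \<and> z k \<in> edom U \<and> p k \<in> subdiff U (z k) \<and> 0 < \<sigma> k)"
proof -
  obtain r where r: "0 < r" "ball zb r \<subseteq> S"
    using S open_contains_ball by blast
  define \<epsilon> where "\<epsilon> k = min (r / 2) (1 / real (Suc k))" for k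
  have "0 < \<epsilon> k" for k
    using r(1) by (simp add: \<epsilon>_def)
  then have "\<forall>k. \<exists>z p \<sigma>. z \<in> edom U \<and> p \<in> subdiff U z \<and> 0 < \<sigma> \<and>
           norm (z - zb) \<le> \<epsilon> k \<and> norm (\<sigma> *\<^sub>R (p, -1) - (n, nu)) \<le> \<epsilon> k"
    using normal_cone_epi_approx_subdiff[OF lsc proper Ub normal] by blast
  then obtain z p \<sigma> where approx: "\<And>k. z k \<in> edom U \<and> p k \<in> subdiff U (z k) \<and> 0 < \<sigma> k \<and>
           norm (z k - zb) \<le> \<epsilon> k \<and> norm (\<sigma> k *\<^sub>R (p k, -1) - (n, nu)) \<le> \<epsilon> k"
    by metis
  have \<epsilon>_0: "\<epsilon> \<longlonglongrightarrow> 0"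
  proof (rule tendsto_sandwich[of "\<lambda>_. 0" _ _ "\<lambda>k. 1 / real (Suc k)"])
    show "(\<lambda>k. 1 / real (Suc k)) \<longlonglongrightarrow> 0"
      using LIMSEQ_Suc[OF lim_1_over_n] by simp
  qed (use r(1) in \<open>simp_all add: \<epsilon>_def\<close>)
  have "z \<longlonglongrightarrow> zb"
    using approx by (intro Lim_null_comparison[OF _ \<epsilon>_0, THEN LIM_zero_cancel]) simp
  moreover have "(\<lambda>k. \<sigma> k *\<^sub>R (p k, -1)) \<longlonglongrightarrow> (n, nu)"
    using approx by (intro Lim_null_comparison[OF _ \<epsilon>_0, THEN LIM_zero_cancel]) simp
  moreover have "z k \<in> S" for k
    using approx[of k] r \<open>0 < r\<close> by (auto simp: \<epsilon>_def dist_norm norm_minus_commute)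
  ultimately show ?thesis
    using approx by blast
qed

section \<open>Approximate subgradients and the conjugate Hamiltonian\<close>

lemma convex_on_approx_subgradient:
  fixes h :: "'a::euclidean_space \<Rightarrow> real"
  assumes "convex_on UNIV h" "0 < \<delta>"
  shows "\<exists>v. \<forall>p. h q - \<delta> + inner v (p - q) \<le> h p"
proof -
  have "continuous_on UNIV h"
    using convex_on_continuous[OF open_UNIV assms(1)] .
  define S where "S = {z. h (fst z) \<le> snd z}"
  have "convex S"
    using convex_epigraph[of UNIV h] assms(1) by (simp add: S_def epigraph_def case_prod_beta)
  moreover have "closed S"
    unfolding S_def using \<open>continuous_on UNIV h\<close>
    by (intro closed_Collect_le) (auto intro!: continuous_on_compose2[of UNIV h] continuous_intros)
  moreover have "(q, h q - \<delta>) \<notin> S"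
    using assms(2) by (simp add: S_def)
  ultimately have "\<exists>a b. inner a (q, h q - \<delta>) < b \<and> (\<forall>z\<in>S. b < inner a z)"
    by (rule separating_hyperplane_closed_point)
  then obtain a b where ab: "inner a (q, h q - \<delta>) < b" "\<forall>z\<in>S. b < inner a z"
    by blast
  obtain a1 a2 where a: "a = (a1, a2)"
    by (cases a)
  have sep: "inner a1 q + a2 * (h q - \<delta>) < inner a1 p + a2 * h p" for p
  proof -
    have "b < inner a (p, h p)"
      using ab(2) by (simp add: S_def)
    then show ?thesis
      using ab(1) by (simp add: a)
  qed
  then have "0 < a2 * \<delta>"
    using sep[of q] by (simp add: algebra_simps)
  then have "0 < a2"
    using assms(2) by (simp add: zero_less_mult_iff)
  have "h q - \<delta> + inner (- (1 / a2) *\<^sub>R a1) (p - q) \<le> h p" for p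
  proof -
    have "a2 * (h q - \<delta> + inner (- (1 / a2) *\<^sub>R a1) (p - q)) < a2 * h p"
      using sep[of p] \<open>0 < a2\<close> by (simp add: inner_diff_right algebra_simps)
    then show ?thesis
      using \<open>0 < a2\<close> by simp
  qed
  then show ?thesis
    by blast
qed

lemma approx_subgradient_norm_le:
  fixes h :: "'a::real_inner \<Rightarrow> real"
  assumes sub: "\<And>p. h q - \<delta> + inner v (p - q) \<le> h p"
    and lip: "\<And>p. h p - h q \<le> C * norm (p - q)" and "0 \<le> C"
  shows "norm v \<le> C + \<delta>"
proof (cases "v = 0")
  case True
  then show ?thesis
    using sub[of q] \<open>0 \<le> C\<close> by simp
next
  case False
  define p where "p = q + (1 / norm v) *\<^sub>R v"
  have "inner v (p - q) = norm v" "norm (p - q) = 1"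
    using False by (simp_all add: p_def power2_norm_eq_inner[symmetric] power2_eq_square)
  then show ?thesis
    using sub[of p] lip[of p] by simp
qed

lemma hconj_ge: "ereal (inner v p - H t x p) \<le> hconj H t x v"
  unfolding hconj_def by (rule SUP_upper) simp

lemma hconj_approx_subgradient_le:
  assumes "\<And>p. H t x q - \<delta> + inner v (p - q) \<le> H t x p"
  shows "hconj H t x v \<le> ereal (inner v q - H t x q + \<delta>)"
  unfolding hconj_def
proof (rule SUP_least)
  fix p
  show "ereal (inner v p - H t x p) \<le> ereal (inner v q - H t x q + \<delta>)"
    using assms[of p] by (simp add: inner_diff_right)
qed

lemma hconj_dual_estimate:
  fixes H :: "real \<Rightarrow> 'a::euclidean_space \<Rightarrow> 'a \<Rightarrow> real"
  assumes convex: "convex_on UNIV (H t x)"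
    and lip: "\<And>p q. \<bar>H t x p - H t x q\<bar> \<le> C * norm (p - q)" and "0 \<le> C"
    and "0 < \<delta>" and HJ: "pt \<le> H t x (- px)" and a: "0 \<le> a" "- nu \<le> a"
  shows "\<exists>v. v \<in> edom (hconj H t x) \<and>
           nt + inner v nx - nu * real_of_ereal (hconj H t x v)
             \<le> a * \<delta> + \<bar>nt - a * pt\<bar> + (C + \<delta>) * norm (nx - a *\<^sub>R px) + (a + nu) * \<bar>H t x 0\<bar>"
proof -
  obtain v where v: "\<And>p. H t x (- px) - \<delta> + inner v (p - - px) \<le> H t x p"
    using convex_on_approx_subgradient[OF convex \<open>0 < \<delta>\<close>] by blast
  define L where "L = real_of_ereal (hconj H t x v)"
  have "ereal (- H t x 0) \<le> hconj H t x v"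
    using hconj_ge[of v 0 H t x] by simp
  moreover have "hconj H t x v \<le> ereal (inner v (- px) - H t x (- px) + \<delta>)"
    using v by (rule hconj_approx_subgradient_le)
  ultimately have L: "hconj H t x v = ereal L" "- H t x 0 \<le> L" "L \<le> - inner v px - H t x (- px) + \<delta>"
    by (cases "hconj H t x v"; simp add: L_def)+
  have "norm v \<le> C + \<delta>"
  proof (rule approx_subgradient_norm_le[OF v _ \<open>0 \<le> C\<close>])
    show "H t x p - H t x (- px) \<le> C * norm (p - - px)" for p
      using lip[of p "- px"] by (rule abs_le_D1)
  qed
  then have inner_le: "inner v (nx - a *\<^sub>R px) \<le> (C + \<delta>) * norm (nx - a *\<^sub>R px)"
    by (meson norm_cauchy_schwarz mult_right_mono norm_ge_zero order_trans)
  have HJ_le: "a * (pt + inner v px + L) \<le> a * \<delta>"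
    using L(3) HJ a(1) by (simp add: mult_left_mono)
  have L_le: "(- nu - a) * L \<le> (a + nu) * \<bar>H t x 0\<bar>"
  proof -
    have "(- nu - a) * L \<le> (- nu - a) * (- H t x 0)"
      using L(2) a(2) by (intro mult_left_mono_neg) simp_all
    also have "\<dots> = (a + nu) * H t x 0"
      by (simp add: algebra_simps)
    also have "\<dots> \<le> (a + nu) * \<bar>H t x 0\<bar>"
      using a(2) by (intro mult_left_mono) simp_all
    finally show ?thesis .
  qed
  have "nt + inner v nx - nu * L = a * (pt + inner v px + L) + (nt - a * pt)
      + inner v (nx - a *\<^sub>R px) + (- nu - a) * L"
    by (simp add: algebra_simps inner_diff_right)
  also have "\<dots> \<le> a * \<delta> + \<bar>nt - a * pt\<bar> + (C + \<delta>) * norm (nx - a *\<^sub>R px) + (a + nu) * \<bar>H t x 0\<bar>"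
    using add_mono[OF add_mono[OF add_mono[OF HJ_le abs_ge_self] inner_le] L_le] .
  finally show ?thesis
    using L(1) by (intro exI[of _ v]) (simp add: edom_def)
qed

lemma positive_rescaling_limit:
  fixes P :: "nat \<Rightarrow> 'a::real_normed_vector"
  assumes \<sigma>: "\<And>k. 0 < \<sigma> k" and \<sigma>_lim: "\<sigma> \<longlonglongrightarrow> \<mu>" and \<sigma>P: "(\<lambda>k. \<sigma> k *\<^sub>R P k) \<longlonglongrightarrow> n"
  shows "\<exists>a. a \<longlonglongrightarrow> \<mu> \<and> (\<lambda>k. a k *\<^sub>R P k) \<longlonglongrightarrow> n \<and> (\<forall>k. 0 \<le> a k \<and> \<mu> \<le> a k)"
proof (cases "\<mu> = 0")
  case True
  then show ?thesis
    using assms less_imp_le by blast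
next
  case False
  have "0 \<le> \<mu>"
    using \<sigma>_lim by (rule LIMSEQ_le_const) (use \<sigma> less_imp_le in blast)
  have "(\<lambda>k. (\<mu> / \<sigma> k) *\<^sub>R (\<sigma> k *\<^sub>R P k)) \<longlonglongrightarrow> (\<mu> / \<mu>) *\<^sub>R n"
    using False by (intro tendsto_intros \<sigma>_lim \<sigma>P)
  then have "(\<lambda>k. \<mu> *\<^sub>R P k) \<longlonglongrightarrow> n"
    using False \<sigma> by (simp add: less_imp_neq[symmetric])
  then show ?thesis
    using \<open>0 \<le> \<mu>\<close> by (intro exI[of _ "\<lambda>_. \<mu>"]) simp
qed

lemma uniform_lipschitz_along_convergent:
  fixes H :: "real \<Rightarrow> 'a::real_normed_vector \<Rightarrow> 'a \<Rightarrow> real"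
  assumes H3: "\<And>R. R \<ge> 0 \<Longrightarrow> \<exists>C\<ge>0. \<forall>t\<in>{0..T}. \<forall>x\<in>cball 0 R. \<forall>p q.
               \<bar>H t x p - H t x q\<bar> \<le> C * norm (p - q)"
    and tk: "\<And>k. tk k \<in> {0..T}" and "xk \<longlonglongrightarrow> x"
  shows "\<exists>C\<ge>0. \<forall>k p q. \<bar>H (tk k) (xk k) p - H (tk k) (xk k) q\<bar> \<le> C * norm (p - q)"
proof -
  have "Bseq xk"
    using \<open>xk \<longlonglongrightarrow> x\<close> by (rule convergent_imp_Bseq[OF convergentI])
  then obtain R where R: "0 < R" "\<And>k. xk k \<in> cball 0 R"
    unfolding Bseq_def by (auto simp: mem_cball_0)
  from H3[OF less_imp_le[OF R(1)]] obtain C where "0 \<le> C"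
    and C: "\<forall>t\<in>{0..T}. \<forall>x\<in>cball 0 R. \<forall>p q. \<bar>H t x p - H t x q\<bar> \<le> C * norm (p - q)"
    by blast
  have "\<bar>H (tk k) (xk k) p - H (tk k) (xk k) q\<bar> \<le> C * norm (p - q)" for k p q
    using C tk[of k] R(2)[of k] by blast
  with \<open>0 \<le> C\<close> show ?thesis
    by blast
qed

lemma hconj_dual_estimate_sequence:
  fixes H :: "real \<Rightarrow> 'a::euclidean_space \<Rightarrow> 'a \<Rightarrow> real"
  assumes H1: "continuous_on ({0..T} \<times> UNIV \<times> UNIV) (\<lambda>(t, x, p). H t x p)"
    and H2: "\<And>t x. t \<in> {0..T} \<Longrightarrow> convex_on UNIV (H t x)"
    and H3: "\<And>R. R \<ge> 0 \<Longrightarrow> \<exists>C\<ge>0. \<forall>t\<in>{0..T}. \<forall>x\<in>cball 0 R. \<forall>p q.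
               \<bar>H t x p - H t x q\<bar> \<le> C * norm (p - q)"
    and tk: "\<And>k. tk k \<in> {0..T}" and t: "t \<in> {0..T}" and lim: "(\<lambda>k. (tk k, xk k)) \<longlonglongrightarrow> (t, x)"
    and \<sigma>: "\<And>k. 0 < \<sigma> k" and normal: "(\<lambda>k. \<sigma> k *\<^sub>R (P k, -1)) \<longlonglongrightarrow> ((nt, nx), nu)"
    and HJ: "\<And>k. fst (P k) \<le> H (tk k) (xk k) (- snd (P k))"
  shows "\<exists>\<alpha> v. \<alpha> \<longlonglongrightarrow> 0 \<and> (\<forall>k. v k \<in> edom (hconj H (tk k) (xk k)) \<and>
           nt + inner (v k) nx - nu * real_of_ereal (hconj H (tk k) (xk k) (v k)) \<le> \<alpha> k)"
proof -
  have "\<sigma> \<longlonglongrightarrow> - nu" "(\<lambda>k. \<sigma> k *\<^sub>R P k) \<longlonglongrightarrow> (nt, nx)"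
    using tendsto_minus[OF tendsto_snd[OF normal]] tendsto_fst[OF normal] by simp_all
  from positive_rescaling_limit[of \<sigma>, OF \<sigma> this]
  obtain a where a_lim: "a \<longlonglongrightarrow> - nu" and aP: "(\<lambda>k. a k *\<^sub>R P k) \<longlonglongrightarrow> (nt, nx)"
    and a: "\<And>k. 0 \<le> a k" "\<And>k. - nu \<le> a k"
    by blast
  have "xk \<longlonglongrightarrow> x"
    using tendsto_snd[OF lim] by simp
  from uniform_lipschitz_along_convergent[where H = H and tk = tk, OF H3 tk this]
  obtain C where "0 \<le> C"
    and lip: "\<And>k p q. \<bar>H (tk k) (xk k) p - H (tk k) (xk k) q\<bar> \<le> C * norm (p - q)"
    by blast
  define \<delta> where "\<delta> k = 1 / real (Suc k)" for k
  have \<delta>: "0 < \<delta> k" for k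
    by (simp add: \<delta>_def)
  define \<alpha> where "\<alpha> k = a k * \<delta> k + \<bar>nt - a k * fst (P k)\<bar> + (C + \<delta> k) * norm (nx - a k *\<^sub>R snd (P k))
    + (a k + nu) * \<bar>H (tk k) (xk k) 0\<bar>" for k
  define good where "good k v \<longleftrightarrow> v \<in> edom (hconj H (tk k) (xk k)) \<and>
      nt + inner v nx - nu * real_of_ereal (hconj H (tk k) (xk k) v) \<le> \<alpha> k" for k v
  have "\<exists>v. good k v" for k
    unfolding good_def \<alpha>_def
    using hconj_dual_estimate[of H "tk k" "xk k", OF H2[OF tk] lip[of k] \<open>0 \<le> C\<close> \<delta>[of k] HJ[of k] a[of k]]
    by blast
  define v where "v k = (SOME v. good k v)" for k
  have "good k (v k)" for k
    unfolding v_def by (rule someI_ex) fact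
  moreover have "\<alpha> \<longlonglongrightarrow> 0"
  proof -
    have "(\<lambda>k. (\<lambda>(t, x, p). H t x p) (tk k, xk k, 0)) \<longlonglongrightarrow> (\<lambda>(t, x, p). H t x p) (t, x, 0)"
      using tendsto_fst[OF lim] \<open>xk \<longlonglongrightarrow> x\<close> tk t
      by (intro continuous_on_tendsto_compose[OF H1]) (auto intro!: tendsto_intros)
    then have H_lim: "(\<lambda>k. H (tk k) (xk k) 0) \<longlonglongrightarrow> H t x 0"
      by simp
    have \<delta>_lim: "\<delta> \<longlonglongrightarrow> 0"
      unfolding \<delta>_def using LIMSEQ_Suc[OF lim_1_over_n] by simp
    have aP_fst: "(\<lambda>k. a k * fst (P k)) \<longlonglongrightarrow> nt" and aP_snd: "(\<lambda>k. a k *\<^sub>R snd (P k)) \<longlonglongrightarrow> nx"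
      using tendsto_fst[OF aP] tendsto_snd[OF aP] by simp_all
    have "(\<lambda>k. a k * \<delta> k) \<longlonglongrightarrow> - nu * 0"
      by (intro tendsto_mult a_lim \<delta>_lim)
    moreover have "(\<lambda>k. \<bar>nt - a k * fst (P k)\<bar>) \<longlonglongrightarrow> \<bar>nt - nt\<bar>"
      by (intro tendsto_rabs tendsto_diff tendsto_const aP_fst)
    moreover have "(\<lambda>k. (C + \<delta> k) * norm (nx - a k *\<^sub>R snd (P k))) \<longlonglongrightarrow> (C + 0) * norm (nx - nx)"
      by (intro tendsto_mult tendsto_add tendsto_const \<delta>_lim tendsto_norm tendsto_diff aP_snd)
    moreover have "(\<lambda>k. (a k + nu) * \<bar>H (tk k) (xk k) 0\<bar>) \<longlonglongrightarrow> (- nu + nu) * \<bar>H t x 0\<bar>"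
      by (intro tendsto_mult tendsto_add tendsto_const a_lim tendsto_rabs H_lim)
    ultimately have "\<alpha> \<longlonglongrightarrow> - nu * 0 + \<bar>nt - nt\<bar> + (C + 0) * norm (nx - nx) + (- nu + nu) * \<bar>H t x 0\<bar>"
      unfolding \<alpha>_def[abs_def] by (intro tendsto_add)
    then show ?thesis
      by simp
  qed
  ultimately show ?thesis
    unfolding good_def by (intro exI[of _ \<alpha>] exI[of _ v]) simp
qed

theorem proposition5p8:
  fixes U :: "real \<times> 'a::euclidean_space \<Rightarrow> ereal"
    and H :: "real \<Rightarrow> 'a \<Rightarrow> 'a \<Rightarrow> real"
    and T :: real
  assumes U_proper: "proper_fun U"
    and U_lsc: "lsc U"
    and U_outside: "\<And>t x. t \<notin> {0..T} \<Longrightarrow> U (t, x) = \<infinity>"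
    and H1: "continuous_on ({0..T} \<times> UNIV \<times> UNIV) (\<lambda>(t, x, p). H t x p)"
    and H2: "\<And>t x. t \<in> {0..T} \<Longrightarrow> convex_on UNIV (H t x)"
    and H3: "\<And>R. R \<ge> 0 \<Longrightarrow> \<exists>C\<ge>0. \<forall>t\<in>{0..T}. \<forall>x\<in>cball 0 R. \<forall>p q.
               \<bar>H t x p - H t x q\<bar> \<le> C * norm (p - q)"
    and HJ: "\<And>t x pt px. (t, x) \<in> edom U \<Longrightarrow> t < T \<Longrightarrow>
               (pt, px) \<in> subdiff U (t, x) \<Longrightarrow> - pt + H t x (- px) \<ge> 0"
  shows "\<forall>t x nt nx nu. (t, x) \<in> edom U \<and> 0 \<le> t \<and> t < T \<and>
           ((nt, nx), nu) \<in> normal_cone (epi U) ((t, x), real_of_ereal (U (t, x))) \<longrightarrow>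
           (\<exists>tk xk \<alpha>k vk.
              ((\<lambda>k. (tk k, xk k)) \<longlonglongrightarrow> (t, x)) \<and> (\<alpha>k \<longlonglongrightarrow> 0) \<and>
              (\<forall>k. tk k \<in> {0..T} \<and> vk k \<in> edom (hconj H (tk k) (xk k)) \<and>
                   nt + inner (vk k) nx - nu * real_of_ereal (hconj H (tk k) (xk k) (vk k))
                     \<le> \<alpha>k k))"
proof (intro allI impI, elim conjE)
  fix t x nt nx nu
  assume dom: "(t, x) \<in> edom U" and "0 \<le> t" "t < T"
    and normal: "((nt, nx), nu) \<in> normal_cone (epi U) ((t, x), real_of_ereal (U (t, x)))"
  have proper: "\<And>z. U z \<noteq> -\<infinity>"
    using U_proper unfolding proper_fun_def by blast
  have Ut: "U (t, x) = ereal (real_of_ereal (U (t, x)))"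
    using dom by (cases "U (t, x)") (auto simp: edom_def)
  have "open ({..<T} \<times> (UNIV :: 'a set))"
    by (intro open_Times open_lessThan open_UNIV)
  moreover have "(t, x) \<in> {..<T} \<times> UNIV"
    using \<open>t < T\<close> by simp
  ultimately obtain Z P \<sigma> where lim: "Z \<longlonglongrightarrow> (t, x)"
    and normal_lim: "(\<lambda>k. \<sigma> k *\<^sub>R (P k, -1)) \<longlonglongrightarrow> ((nt, nx), nu)"
    and Z: "\<And>k. Z k \<in> {..<T} \<times> UNIV \<and> Z k \<in> edom U \<and> P k \<in> subdiff U (Z k) \<and> 0 < \<sigma> k"
    using normal_cone_epi_limit_subdiff[OF U_lsc proper Ut normal] by blast
  define tk xk where "tk k = fst (Z k)" and "xk k = snd (Z k)" for k
  have Z_eq: "Z k = (tk k, xk k)" for k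
    by (simp add: tk_def xk_def)
  have tk: "tk k \<in> {0..T}" for k
  proof -
    have "U (tk k, xk k) \<noteq> \<infinity>"
      using Z[of k] by (simp add: Z_eq edom_def)
    then show ?thesis
      using U_outside by blast
  qed
  have lim_tx: "(\<lambda>k. (tk k, xk k)) \<longlonglongrightarrow> (t, x)"
    using lim by (simp add: Z_eq[symmetric])
  have HJ_k: "fst (P k) \<le> H (tk k) (xk k) (- snd (P k))" for k
    using HJ[of "tk k" "xk k" "fst (P k)" "snd (P k)"] Z[of k] by (simp add: Z_eq)
  have "t \<in> {0..T}" "\<And>k. 0 < \<sigma> k"
    using \<open>0 \<le> t\<close> \<open>t < T\<close> Z by simp_all
  from hconj_dual_estimate_sequence[OF H1 H2 H3 tk this(1) lim_tx this(2) normal_lim HJ_k]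
  obtain \<alpha> v where "\<alpha> \<longlonglongrightarrow> 0" "\<forall>k. v k \<in> edom (hconj H (tk k) (xk k)) \<and>
      nt + inner (v k) nx - nu * real_of_ereal (hconj H (tk k) (xk k) (v k)) \<le> \<alpha> k"
    by blast
  with lim_tx tk
  show "\<exists>tk xk \<alpha>k vk.
          ((\<lambda>k. (tk k, xk k)) \<longlonglongrightarrow> (t, x)) \<and> (\<alpha>k \<longlonglongrightarrow> 0) \<and>
          (\<forall>k. tk k \<in> {0..T} \<and> vk k \<in> edom (hconj H (tk k) (xk k)) \<and>
               nt + inner (vk k) nx - nu * real_of_ereal (hconj H (tk k) (xk k) (vk k)) \<le> \<alpha>k k)"
    by (intro exI[of _ tk] exI[of _ xk] exI[of _ \<alpha>] exI[of _ v]) simp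
qed

end
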